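(* Let $D \ge 1$ and let $L \colon \mathbb{Z}^D \times \mathbb{R}_+ \to \mathbb{R}$ be a discrete scale-space representation of a discrete signal $f \colon \mathbb{Z}^D \to \mathbb{R}$. Then $L$ satisfies the differential equation $$\partial_s L = \mathcal{A} L, \qquad (\mathcal{A} L)(x;s) = \sum_{\xi \in \mathbb{Z}^D} a_\xi \, L(x+\xi;s),$$ with initial condition $L(\cdot;0) = f(\cdot)$, for some infinitesimal scale-space generator $\mathcal{A}$ whose coefficients $a_\xi \in \mathbb{R}$ satisfy: (i) the locality condition: $a_\xi = 0$ if $|\xi|_\infty > 1$; (ii) the positivity constraint: $a_\xi \ge 0$ if $\xi \ne 0$; (iii) the zero sum condition: $\sum_{\xi \in \mathbb{Z}^D} a_\xi = 0$.
   Context: A one-parameter family of kernels $T \colon \mathbb{Z}^D \times \mathbb{R}_+ \to \mathbb{R}$ is a discrete pre-scale-space family of kernels if $T(\cdot;0) = \delta(\cdot)$ (discrete delta), $T(\cdot;s_1) * T(\cdot;s_2) = T(\cdot;s_1+s_2)$ for all $s_1, s_2 \ge 0$, and $\|T(\cdot;s) - \delta(\cdot)\|_1 \to 0$ as $s \downarrow 0$. The discrete pre-scale-space representation of $f$ generated by $T$ is $L(x;s) = \sum_{\xi \in \mathbb{Z}^D} T(\xi;s) f(x-\xi)$. Such an $L$ possesses pre-scale-space properties (does not enhance local extrema) if for every $s_0 \in \mathbb{R}_+$: whenever $x_0 \in \mathbb{Z}^D$ is a local maximum of $x \mapsto L(x;s_0)$ then $\partial_s L(x_0;s_0) \le 0$,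 and whenever $x_0$ is a local minimum then $\partial_s L(x_0;s_0) \ge 0$. Local extrema are understood in the weak (non-strict) sense with respect to the neighbourhood $\{x : \|x - x_0\|_\infty = 1\}$, i.e. $x_0$ is a local maximum if $L(x_0;s_0) \ge L(x;s_0)$ for all $x$ with $\|x-x_0\|_\infty = 1$ (analogously for minima). A discrete pre-scale-space family $T$ is a discrete scale-space family of kernels if for every discrete signal $f \in l_1$ the pre-scale-space representation of $f$ generated by $T$ possesses pre-scale-space properties. A discrete scale-space representation of $f$ is a discrete pre-scale-space representation of $f$ generated by a discrete scale-space family of kernels. *)

theory Defs
  imports "HOL-Analysis.Analysis"
begin

text \<open>The lattice Z^D is modelled as int ^ 'n for a finite index type 'n (D = CARD('n) \<ge> 1).\<close>

definition ddelta :: "int ^ 'n \<Rightarrow> real" where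
  "ddelta x = (if x = 0 then 1 else 0)"

definition linf :: "int ^ 'n::finite \<Rightarrow> int" where
  "linf x = Max (range (\<lambda>i. \<bar>x $ i\<bar>))"

definition dconv :: "(int ^ 'n \<Rightarrow> real) \<Rightarrow> (int ^ 'n \<Rightarrow> real) \<Rightarrow> int ^ 'n \<Rightarrow> real" where
  "dconv g h x = (\<Sum>\<^sub>\<infinity>\<xi>. g \<xi> * h (x - \<xi>))"

definition l1norm :: "(int ^ 'n \<Rightarrow> real) \<Rightarrow> real" where
  "l1norm g = (\<Sum>\<^sub>\<infinity>x. \<bar>g x\<bar>)"

text \<open>Kernels T(.;s) for s \<ge> 0 (values for s < 0 are irrelevant); kernels are taken in l1.\<close>
definition pre_scale_space_kernels :: "(int ^ 'n \<Rightarrow> real \<Rightarrow> real) \<Rightarrow> bool" where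
  "pre_scale_space_kernels T \<longleftrightarrow>
     (\<forall>s\<ge>0. (\<lambda>x. \<bar>T x s\<bar>) summable_on UNIV) \<and>
     (\<forall>x. T x 0 = ddelta x) \<and>
     (\<forall>s1\<ge>0. \<forall>s2\<ge>0. \<forall>x. dconv (\<lambda>\<xi>. T \<xi> s1) (\<lambda>\<xi>. T \<xi> s2) x = T x (s1 + s2)) \<and>
     ((\<lambda>s. l1norm (\<lambda>x. T x s - ddelta x)) \<longlongrightarrow> 0) (at_right 0)"

definition pre_scale_space_rep ::
  "(int ^ 'n \<Rightarrow> real \<Rightarrow> real) \<Rightarrow> (int ^ 'n \<Rightarrow> real) \<Rightarrow> int ^ 'n \<Rightarrow> real \<Rightarrow> real" where
  "pre_scale_space_rep T f x s = (\<Sum>\<^sub>\<infinity>\<xi>. T \<xi> s * f (x - \<xi>))"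

text \<open>Non-enhancement of local extrema (weak extrema w.r.t. the sup-norm ring);
  the scale derivative is taken one-sidedly within [0,\<infinity>).\<close>
definition has_pre_scale_space_props :: "(int ^ 'n::finite \<Rightarrow> real \<Rightarrow> real) \<Rightarrow> bool" where
  "has_pre_scale_space_props L \<longleftrightarrow>
     (\<forall>s0\<ge>0. \<forall>x0.
        ((\<forall>x. linf (x - x0) = 1 \<longrightarrow> L x s0 \<le> L x0 s0) \<longrightarrow>
           (\<forall>d. ((\<lambda>s. L x0 s) has_real_derivative d) (at s0 within {0..}) \<longrightarrow> d \<le> 0)) \<and>
        ((\<forall>x. linf (x - x0) = 1 \<longrightarrow> L x s0 \<ge> L x0 s0) \<longrightarrow>
           (\<forall>d. ((\<lambda>s. L x0 s) has_real_derivative d) (at s0 within {0..}) \<longrightarrow> d \<ge> 0)))"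

definition scale_space_kernels :: "(int ^ 'n::finite \<Rightarrow> real \<Rightarrow> real) \<Rightarrow> bool" where
  "scale_space_kernels T \<longleftrightarrow> pre_scale_space_kernels T \<and>
     (\<forall>f :: int ^ 'n \<Rightarrow> real. (\<lambda>x. \<bar>f x\<bar>) summable_on UNIV \<longrightarrow>
        has_pre_scale_space_props (pre_scale_space_rep T f))"

end

theory Submission
  imports Defs
begin

text \<open>The kernels \<open>T(\<cdot>; s)\<close> form a semigroup in the commutative Banach algebra
  \<open>\<ell>\<^sup>1(\<int>\<^sup>D)\<close> under convolution, continuous in norm at \<open>s = 0\<close>. Such a semigroup is
  differentiable with \<open>U'(s) = U(s) A\<close> for some \<open>A \<in> \<ell>\<^sup>1\<close>, because the average
  \<open>(1/d) \<integral>\<^sub>0\<^sup>d U\<close> is invertible for small \<open>d\<close>; hence every \<open>L = T * f\<close> satisfies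
  \<open>\<partial>\<^sub>s L = A * L\<close>. For \<open>f = \<delta>\<close> we have \<open>L = T\<close> and \<open>L(\<cdot>; 0) = \<delta>\<close>: a point
  \<open>y \<noteq> 0\<close> is a minimum there, so \<open>A(y) \<ge> 0\<close>, and if \<open>|y|\<^sub>\<infinity> > 1\<close> all its neighbours
  vanish too, so it is also a maximum and \<open>A(y) = 0\<close>. For the indicator of the unit cube the
  origin is both a maximum and a minimum at \<open>s = 0\<close>, which forces \<open>\<Sum> A = 0\<close>.\<close>

lemma summable_on_abs_real:
  fixes g :: "'a \<Rightarrow> real"
  assumes "g summable_on A"
  shows "(\<lambda>x. \<bar>g x\<bar>) summable_on A"
  using assms summable_on_iff_abs_summable_on_real[of g A] by (simp add: real_norm_def)

lemma summable_on_real_of_abs: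
  fixes g :: "'a \<Rightarrow> real"
  assumes "(\<lambda>x. \<bar>g x\<bar>) summable_on A"
  shows "g summable_on A"
  using assms summable_on_iff_abs_summable_on_real[of g A] by (simp add: real_norm_def)

lemma summable_on_diff:
  fixes g h :: "'a \<Rightarrow> 'b::real_normed_vector"
  assumes "g summable_on A" "h summable_on A"
  shows "(\<lambda>x. g x - h x) summable_on A"
  using summable_on_add[OF assms(1), of "\<lambda>x. - h x"] assms(2) by (simp add: summable_on_uminus)

lemma abs_le_infsum_abs:
  fixes g :: "'a \<Rightarrow> real"
  assumes "g summable_on UNIV"
  shows "\<bar>g x\<bar> \<le> (\<Sum>\<^sub>\<infinity>y. \<bar>g y\<bar>)"
proof -
  have "(\<Sum>\<^sub>\<infinity>y\<in>{x}. \<bar>g y\<bar>) \<le> (\<Sum>\<^sub>\<infinity>y. \<bar>g y\<bar>)"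
    by (rule infsum_mono_neutral) (auto intro: summable_on_abs_real assms)
  then show ?thesis by simp
qed

lemma infsum_single_point:
  fixes g :: "'a \<Rightarrow> 'b::{topological_comm_monoid_add, t2_space}"
  assumes "\<And>x. x \<noteq> a \<Longrightarrow> g x = 0"
  shows "(\<Sum>\<^sub>\<infinity>x. g x) = g a"
proof -
  have "(\<Sum>\<^sub>\<infinity>x. g x) = (\<Sum>\<^sub>\<infinity>x\<in>{a}. g x)"
    by (rule infsum_cong_neutral) (use assms in auto)
  then show ?thesis by simp
qed

lemma summable_on_single_point:
  fixes g :: "'a \<Rightarrow> 'b::topological_comm_monoid_add"
  assumes "\<And>x. x \<noteq> a \<Longrightarrow> g x = 0"
  shows "g summable_on UNIV"
proof -
  have "g summable_on UNIV \<longleftrightarrow> g summable_on {a}"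
    by (rule summable_on_cong_neutral) (use assms in auto)
  then show ?thesis by simp
qed

section \<open>Convolution on a discrete abelian group\<close>

definition convolution :: "('a::ab_group_add \<Rightarrow> real) \<Rightarrow> ('a \<Rightarrow> real) \<Rightarrow> 'a \<Rightarrow> real" where
  "convolution g h x = (\<Sum>\<^sub>\<infinity>\<xi>. g \<xi> * h (x - \<xi>))"

definition unit_impulse :: "'a::zero \<Rightarrow> real" where
  "unit_impulse x = (if x = 0 then 1 else 0)"

lemma summable_on_unit_impulse: "unit_impulse summable_on UNIV"
  by (rule summable_on_single_point[where a = 0]) (simp add: unit_impulse_def)

lemma infsum_abs_unit_impulse: "(\<Sum>\<^sub>\<infinity>x. \<bar>unit_impulse x\<bar>) = 1"
  by (subst infsum_single_point[where a = 0]) (simp_all add: unit_impulse_def)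

lemma summable_on_tensor_product:
  fixes g h :: "'a \<Rightarrow> real"
  assumes g: "g summable_on UNIV" and h: "h summable_on UNIV"
  shows "(\<lambda>(a, b). g a * h b) summable_on UNIV"
proof -
  have "(\<lambda>p. norm (g (fst p) * h (snd p))) summable_on Sigma UNIV (\<lambda>_. UNIV)"
  proof (rule Infinite_Sum.abs_summable_on_Sigma_iff[THEN iffD2], intro conjI ballI)
    show "(\<lambda>b. norm (g (fst (a, b)) * h (snd (a, b)))) summable_on UNIV" for a
      using summable_on_cmult_right[OF summable_on_abs_real[OF h], of "\<bar>g a\<bar>"]
      by (simp add: abs_mult real_norm_def)
    show "(\<lambda>a. norm (\<Sum>\<^sub>\<infinity>b\<in>UNIV. norm (g (fst (a, b)) * h (snd (a, b))))) summable_on UNIV"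
      using summable_on_cmult_left[OF summable_on_abs_real[OF g]]
      by (simp add: abs_mult infsum_cmult_right' infsum_nonneg)
  qed
  then show ?thesis
    by (auto intro: summable_on_real_of_abs simp: real_norm_def case_prod_unfold)
qed

lemma summable_on_convolution_pairs:
  fixes g h :: "'a::ab_group_add \<Rightarrow> real"
  assumes "g summable_on UNIV" "h summable_on UNIV"
  shows "(\<lambda>(x, \<xi>). g \<xi> * h (x - \<xi>)) summable_on UNIV"
proof -
  have "bij_betw (\<lambda>(x, \<xi>). (\<xi>, x - \<xi>)) UNIV (UNIV :: ('a \<times> 'a) set)"
    by (rule bij_betwI[where g = "\<lambda>(a, b). (a + b, a)"]) auto
  from summable_on_reindex_bij_betw[OF this, of "\<lambda>(a, b). g a * h b"]
    summable_on_tensor_product[OF assms]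
  show ?thesis by (simp add: case_prod_unfold)
qed

lemma summable_on_convolution_terms:
  fixes g h :: "'a::ab_group_add \<Rightarrow> real"
  assumes g: "g summable_on UNIV" and h: "h summable_on UNIV"
  shows "(\<lambda>\<xi>. g \<xi> * h (x - \<xi>)) summable_on UNIV"
proof -
  have "(\<lambda>\<xi>. \<bar>g \<xi>\<bar> * (\<Sum>\<^sub>\<infinity>y. \<bar>h y\<bar>)) summable_on UNIV"
    by (rule summable_on_cmult_left[OF summable_on_abs_real[OF g]])
  then have "(\<lambda>\<xi>. \<bar>g \<xi> * h (x - \<xi>)\<bar>) summable_on UNIV"
    by (rule summable_on_comparison_test)
      (auto simp: abs_mult intro!: mult_left_mono abs_le_infsum_abs h)
  then show ?thesis by (rule summable_on_real_of_abs)
qed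

lemma summable_on_convolution:
  fixes g h :: "'a::ab_group_add \<Rightarrow> real"
  assumes "g summable_on UNIV" "h summable_on UNIV"
  shows "convolution g h summable_on UNIV"
  using summable_on_Sigma_banach[of "\<lambda>x \<xi>. g \<xi> * h (x - \<xi>)" UNIV "\<lambda>_. UNIV"]
    summable_on_convolution_pairs[OF assms]
  unfolding convolution_def[abs_def] by simp

lemma infsum_abs_convolution_le:
  fixes g h :: "'a::ab_group_add \<Rightarrow> real"
  assumes g: "g summable_on UNIV" and h: "h summable_on UNIV"
  shows "(\<Sum>\<^sub>\<infinity>x. \<bar>convolution g h x\<bar>) \<le> (\<Sum>\<^sub>\<infinity>x. \<bar>g x\<bar>) * (\<Sum>\<^sub>\<infinity>x. \<bar>h x\<bar>)"
proof -
  have pairs: "(\<lambda>(x, \<xi>). \<bar>g \<xi>\<bar> * \<bar>h (x - \<xi>)\<bar>) summable_on UNIV"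
    using summable_on_convolution_pairs[OF summable_on_abs_real[OF g] summable_on_abs_real[OF h]] .
  have "(\<Sum>\<^sub>\<infinity>x. \<bar>convolution g h x\<bar>) \<le> (\<Sum>\<^sub>\<infinity>x. \<Sum>\<^sub>\<infinity>\<xi>. \<bar>g \<xi>\<bar> * \<bar>h (x - \<xi>)\<bar>)"
  proof (rule infsum_mono)
    show "(\<lambda>x. \<bar>convolution g h x\<bar>) summable_on UNIV"
      by (intro summable_on_abs_real summable_on_convolution g h)
    show "(\<lambda>x. \<Sum>\<^sub>\<infinity>\<xi>. \<bar>g \<xi>\<bar> * \<bar>h (x - \<xi>)\<bar>) summable_on UNIV"
      using summable_on_Sigma_banach[of "\<lambda>x \<xi>. \<bar>g \<xi>\<bar> * \<bar>h (x - \<xi>)\<bar>" UNIV "\<lambda>_. UNIV"] pairs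
      by simp
    show "\<bar>convolution g h x\<bar> \<le> (\<Sum>\<^sub>\<infinity>\<xi>. \<bar>g \<xi>\<bar> * \<bar>h (x - \<xi>)\<bar>)" for x
      unfolding convolution_def
      using norm_infsum_bound[of "\<lambda>\<xi>. g \<xi> * h (x - \<xi>)" UNIV]
        summable_on_abs_real[OF summable_on_convolution_terms[OF g h, of x]]
      by (simp add: real_norm_def abs_mult)
  qed
  also have "\<dots> = (\<Sum>\<^sub>\<infinity>\<xi>. \<Sum>\<^sub>\<infinity>x. \<bar>g \<xi>\<bar> * \<bar>h (x - \<xi>)\<bar>)"
    by (rule infsum_swap_banach) (use pairs in simp)
  also have "\<dots> = (\<Sum>\<^sub>\<infinity>\<xi>. \<bar>g \<xi>\<bar> * (\<Sum>\<^sub>\<infinity>x. \<bar>h x\<bar>))"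
  proof (rule infsum_cong)
    fix \<xi> :: 'a
    have "bij_betw (\<lambda>x. x - \<xi>) UNIV UNIV"
      by (rule bij_betwI[of _ _ _ "\<lambda>x::'a. x + \<xi>"]) auto
    from infsum_reindex_bij_betw[OF this, of "\<lambda>y. \<bar>h y\<bar>"]
    show "(\<Sum>\<^sub>\<infinity>x. \<bar>g \<xi>\<bar> * \<bar>h (x - \<xi>)\<bar>) = \<bar>g \<xi>\<bar> * (\<Sum>\<^sub>\<infinity>x. \<bar>h x\<bar>)"
      by (simp add: infsum_cmult_right')
  qed
  also have "\<dots> = (\<Sum>\<^sub>\<infinity>x. \<bar>g x\<bar>) * (\<Sum>\<^sub>\<infinity>x. \<bar>h x\<bar>)"
    by (simp add: infsum_cmult_left')
  finally show ?thesis .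
qed

lemma convolution_commute:
  fixes g h :: "'a::ab_group_add \<Rightarrow> real"
  shows "convolution g h = convolution h g"
proof
  fix x :: 'a
  have "bij_betw (\<lambda>\<xi>. x - \<xi>) UNIV UNIV"
    by (rule bij_betwI[of _ _ _ "\<lambda>\<xi>. x - \<xi>"]) auto
  from infsum_reindex_bij_betw[OF this, of "\<lambda>\<xi>. g \<xi> * h (x - \<xi>)"]
  show "convolution g h x = convolution h g x"
    unfolding convolution_def by (simp add: mult.commute)
qed

lemma convolution_add_left:
  fixes g h k :: "'a::ab_group_add \<Rightarrow> real"
  assumes "g summable_on UNIV" "h summable_on UNIV" "k summable_on UNIV"
  shows "convolution (\<lambda>x. g x + h x) k x = convolution g k x + convolution h k x"
  unfolding convolution_def
  using infsum_add[OF summable_on_convolution_terms[OF assms(1,3)]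
      summable_on_convolution_terms[OF assms(2,3)], of x x]
  by (simp add: distrib_right)

lemma convolution_scale_left:
  fixes g k :: "'a::ab_group_add \<Rightarrow> real"
  shows "convolution (\<lambda>x. c * g x) k x = c * convolution g k x"
  unfolding convolution_def by (simp add: infsum_cmult_right' mult.assoc)

lemma convolution_unit_impulse_left:
  fixes g :: "'a::ab_group_add \<Rightarrow> real"
  shows "convolution unit_impulse g x = g x"
  unfolding convolution_def by (subst infsum_single_point[where a = 0]) (simp_all add: unit_impulse_def)

lemma convolution_assoc:
  fixes g h k :: "'a::ab_group_add \<Rightarrow> real"
  assumes g: "g summable_on UNIV" and h: "h summable_on UNIV" and k: "k summable_on UNIV"
  shows "convolution (convolution g h) k x = convolution g (convolution h k) x"
proof -
  have triples: "(\<lambda>(\<eta>, \<xi>). g \<xi> * h (\<eta> - \<xi>) * k (x - \<eta>)) summable_on UNIV"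
  proof -
    have "(\<lambda>(\<eta>, \<xi>). \<bar>g \<xi> * h (\<eta> - \<xi>)\<bar> * (\<Sum>\<^sub>\<infinity>y. \<bar>k y\<bar>)) summable_on UNIV"
      using summable_on_cmult_left[OF summable_on_abs_real[OF summable_on_convolution_pairs[OF g h]]]
      by (simp add: case_prod_unfold)
    then have "(\<lambda>(\<eta>, \<xi>). \<bar>g \<xi> * h (\<eta> - \<xi>) * k (x - \<eta>)\<bar>) summable_on UNIV"
      by (rule summable_on_comparison_test)
        (auto simp: abs_mult intro!: mult_left_mono abs_le_infsum_abs k)
    then show ?thesis by (auto intro: summable_on_real_of_abs simp: case_prod_unfold)
  qed
  have "convolution (convolution g h) k x = (\<Sum>\<^sub>\<infinity>\<eta>. \<Sum>\<^sub>\<infinity>\<xi>. g \<xi> * h (\<eta> - \<xi>) * k (x - \<eta>))"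
    unfolding convolution_def by (simp add: infsum_cmult_left')
  also have "\<dots> = (\<Sum>\<^sub>\<infinity>\<xi>. \<Sum>\<^sub>\<infinity>\<eta>. g \<xi> * h (\<eta> - \<xi>) * k (x - \<eta>))"
    by (rule infsum_swap_banach) (use triples in simp)
  also have "\<dots> = (\<Sum>\<^sub>\<infinity>\<xi>. g \<xi> * (\<Sum>\<^sub>\<infinity>\<zeta>. h \<zeta> * k (x - \<xi> - \<zeta>)))"
  proof (rule infsum_cong)
    fix \<xi> :: 'a
    have shift: "bij_betw (\<lambda>\<zeta>. \<zeta> + \<xi>) UNIV UNIV"
      by (rule bij_betwI[of _ _ _ "\<lambda>\<eta>::'a. \<eta> - \<xi>"]) auto
    have "(\<Sum>\<^sub>\<infinity>\<eta>. g \<xi> * h (\<eta> - \<xi>) * k (x - \<eta>))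
        = (\<Sum>\<^sub>\<infinity>\<zeta>. g \<xi> * h (\<zeta> + \<xi> - \<xi>) * k (x - (\<zeta> + \<xi>)))"
      using infsum_reindex_bij_betw[OF shift, of "\<lambda>\<eta>. g \<xi> * h (\<eta> - \<xi>) * k (x - \<eta>)"] by simp
    then show "(\<Sum>\<^sub>\<infinity>\<eta>. g \<xi> * h (\<eta> - \<xi>) * k (x - \<eta>)) = g \<xi> * (\<Sum>\<^sub>\<infinity>\<zeta>. h \<zeta> * k (x - \<xi> - \<zeta>))"
      by (simp add: infsum_cmult_right' mult.assoc algebra_simps)
  qed
  also have "\<dots> = convolution g (convolution h k) x"
    unfolding convolution_def ..
  finally show ?thesis .
qed

section \<open>The convolution algebra \<open>\<ell>\<^sup>1\<close>\<close>

typedef ('a::ab_group_add) l1 = "{g :: 'a \<Rightarrow> real. g summable_on UNIV}"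
  morphisms l1_fn Abs_l1
  by (rule exI[of _ "\<lambda>_. 0"]) simp

setup_lifting type_definition_l1

lemma summable_on_l1_fn: "l1_fn g summable_on UNIV"
  using l1_fn by blast

lemma l1_fn_Abs_l1: "g summable_on UNIV \<Longrightarrow> l1_fn (Abs_l1 g) = g"
  by (simp add: Abs_l1_inverse)

instantiation l1 :: (ab_group_add) real_normed_vector
begin

lift_definition zero_l1 :: "'a l1" is "\<lambda>_. 0" by simp
lift_definition plus_l1 :: "'a l1 \<Rightarrow> 'a l1 \<Rightarrow> 'a l1" is "\<lambda>g h x. g x + h x"
  by (rule summable_on_add)
lift_definition uminus_l1 :: "'a l1 \<Rightarrow> 'a l1" is "\<lambda>g x. - g x"
  by (simp add: summable_on_uminus)
lift_definition minus_l1 :: "'a l1 \<Rightarrow> 'a l1 \<Rightarrow> 'a l1" is "\<lambda>g h x. g x - h x"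
  by (rule summable_on_diff)
lift_definition scaleR_l1 :: "real \<Rightarrow> 'a l1 \<Rightarrow> 'a l1" is "\<lambda>c g x. c * g x"
  by (rule summable_on_cmult_right)
lift_definition norm_l1 :: "'a l1 \<Rightarrow> real" is "\<lambda>g. \<Sum>\<^sub>\<infinity>x. \<bar>g x\<bar>" .

definition sgn_l1 :: "'a l1 \<Rightarrow> 'a l1" where "sgn_l1 x = inverse (norm x) *\<^sub>R x"
definition dist_l1 :: "'a l1 \<Rightarrow> 'a l1 \<Rightarrow> real" where "dist_l1 x y = norm (x - y)"
definition uniformity_l1 :: "('a l1 \<times> 'a l1) filter"
  where "uniformity_l1 = (INF e\<in>{0 <..}. principal {(x, y). dist x y < e})"
definition open_l1 :: "'a l1 set \<Rightarrow> bool"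
  where "open_l1 S = (\<forall>x\<in>S. \<forall>\<^sub>F (x', y) in uniformity. x' = x \<longrightarrow> y \<in> S)"

instance
proof
  fix x y z :: "'a l1" and a b :: real
  show "x + y + z = x + (y + z)" by transfer (simp add: add.assoc)
  show "x + y = y + x" by transfer (simp add: add.commute)
  show "0 + x = x" by transfer simp
  show "- x + x = 0" by transfer simp
  show "x - y = x + - y" by transfer simp
  show "a *\<^sub>R (x + y) = a *\<^sub>R x + a *\<^sub>R y" by transfer (simp add: algebra_simps)
  show "(a + b) *\<^sub>R x = a *\<^sub>R x + b *\<^sub>R x" by transfer (simp add: algebra_simps)
  show "a *\<^sub>R b *\<^sub>R x = (a * b) *\<^sub>R x" by transfer (simp add: algebra_simps)
  show "1 *\<^sub>R x = x" by transfer simp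
  show "dist x y = norm (x - y)" by (simp add: dist_l1_def)
  show "sgn x = inverse (norm x) *\<^sub>R x" by (simp add: sgn_l1_def)
  show "uniformity = (INF e\<in>{0<..}. principal {(x, y::'a l1). dist x y < e})"
    by (simp add: uniformity_l1_def)
  show "\<And>U. open U = (\<forall>x\<in>U. \<forall>\<^sub>F (x', y) in uniformity. (x'::'a l1) = x \<longrightarrow> y \<in> U)"
    by (simp add: open_l1_def)
  show "norm x = 0 \<longleftrightarrow> x = 0"
  proof transfer
    fix g :: "'a \<Rightarrow> real"
    assume g: "g summable_on UNIV"
    show "(\<Sum>\<^sub>\<infinity>x. \<bar>g x\<bar>) = 0 \<longleftrightarrow> g = (\<lambda>_. 0)"
    proof
      assume "(\<Sum>\<^sub>\<infinity>x. \<bar>g x\<bar>) = 0"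
      then have "\<bar>g x\<bar> = 0" for x
        using nonneg_infsum_le_0D[of "\<lambda>x. \<bar>g x\<bar>" UNIV x] summable_on_abs_real[OF g] by simp
      then show "g = (\<lambda>_. 0)" by auto
    qed simp
  qed
  show "norm (x + y) \<le> norm x + norm y"
  proof transfer
    fix g h :: "'a \<Rightarrow> real"
    assume g: "g summable_on UNIV" and h: "h summable_on UNIV"
    have "(\<Sum>\<^sub>\<infinity>x. \<bar>g x + h x\<bar>) \<le> (\<Sum>\<^sub>\<infinity>x. \<bar>g x\<bar> + \<bar>h x\<bar>)"
      by (rule infsum_mono)
        (auto intro!: summable_on_abs_real summable_on_add g h simp: abs_triangle_ineq)
    also have "\<dots> = (\<Sum>\<^sub>\<infinity>x. \<bar>g x\<bar>) + (\<Sum>\<^sub>\<infinity>x. \<bar>h x\<bar>)"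
      by (rule infsum_add) (auto intro!: summable_on_abs_real g h)
    finally show "(\<Sum>\<^sub>\<infinity>x. \<bar>g x + h x\<bar>) \<le> (\<Sum>\<^sub>\<infinity>x. \<bar>g x\<bar>) + (\<Sum>\<^sub>\<infinity>x. \<bar>h x\<bar>)" .
  qed
  show "norm (a *\<^sub>R x) = \<bar>a\<bar> * norm x"
    by transfer (simp add: abs_mult infsum_cmult_right')
qed

end

lemma l1_fn_add: "l1_fn (g + h) x = l1_fn g x + l1_fn h x"
  by transfer simp

lemma l1_fn_diff: "l1_fn (g - h) x = l1_fn g x - l1_fn h x"
  by transfer simp

lemma l1_fn_scaleR: "l1_fn (c *\<^sub>R g) x = c * l1_fn g x"
  by transfer simp

lemma abs_l1_fn_le_norm: "\<bar>l1_fn g x\<bar> \<le> norm g"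
  by transfer (rule abs_le_infsum_abs)

lemma bounded_linear_l1_fn: "bounded_linear (\<lambda>g. l1_fn g x)"
  by (rule bounded_linear_intro[of _ 1]) (auto simp: l1_fn_add l1_fn_scaleR abs_l1_fn_le_norm)

text \<open>A discrete Fatou argument: every finite partial sum of \<open>\<bar>X n - G\<bar>\<close> is a limit of the
  corresponding partial sums of \<open>\<bar>X n - X m\<bar>\<close>.\<close>
lemma l1_limit_estimate:
  fixes X :: "nat \<Rightarrow> 'a::ab_group_add l1"
  assumes Cauchy: "\<And>m. m \<ge> N \<Longrightarrow> norm (X n - X m) \<le> e"
    and lim: "\<And>x. (\<lambda>m. l1_fn (X m) x) \<longlonglongrightarrow> G x"
  shows "(\<lambda>x. \<bar>l1_fn (X n) x - G x\<bar>) summable_on UNIV"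
    and "(\<Sum>\<^sub>\<infinity>x. \<bar>l1_fn (X n) x - G x\<bar>) \<le> e"
proof -
  have finite_sums: "(\<Sum>x\<in>F. \<bar>l1_fn (X n) x - G x\<bar>) \<le> e" if "finite F" for F
  proof (rule LIMSEQ_le_const2)
    show "(\<lambda>m. \<Sum>x\<in>F. \<bar>l1_fn (X n - X m) x\<bar>) \<longlonglongrightarrow> (\<Sum>x\<in>F. \<bar>l1_fn (X n) x - G x\<bar>)"
      by (simp add: l1_fn_diff) (intro tendsto_sum tendsto_rabs tendsto_diff tendsto_const lim)
    show "\<exists>N. \<forall>m\<ge>N. (\<Sum>x\<in>F. \<bar>l1_fn (X n - X m) x\<bar>) \<le> e"
    proof (intro exI allI impI)
      fix m assume "m \<ge> N"
      have "(\<Sum>x\<in>F. \<bar>l1_fn (X n - X m) x\<bar>) \<le> (\<Sum>\<^sub>\<infinity>x. \<bar>l1_fn (X n - X m) x\<bar>)"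
        by (rule finite_sum_le_infsum) (auto intro: summable_on_abs_real summable_on_l1_fn \<open>finite F\<close>)
      also have "\<dots> = norm (X n - X m)"
        by transfer simp
      finally show "(\<Sum>x\<in>F. \<bar>l1_fn (X n - X m) x\<bar>) \<le> e"
        using Cauchy[OF \<open>m \<ge> N\<close>] by linarith
    qed
  qed
  show summable: "(\<lambda>x. \<bar>l1_fn (X n) x - G x\<bar>) summable_on UNIV"
    by (rule nonneg_bdd_above_summable_on) (auto intro!: bdd_aboveI2 finite_sums)
  show "(\<Sum>\<^sub>\<infinity>x. \<bar>l1_fn (X n) x - G x\<bar>) \<le> e"
    by (rule infsum_le_finite_sums[OF summable finite_sums]) auto
qed

instance l1 :: (ab_group_add) banach
proof
  fix X :: "nat \<Rightarrow> 'a l1"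
  assume Cauchy: "Cauchy X"
  define G where "G x = lim (\<lambda>n. l1_fn (X n) x)" for x
  have lim: "(\<lambda>n. l1_fn (X n) x) \<longlonglongrightarrow> G x" for x
    using bounded_linear.Cauchy[OF bounded_linear_l1_fn Cauchy, of x]
    by (simp add: G_def Cauchy_convergent_iff convergent_LIMSEQ_iff)
  have tail: "\<exists>N. \<forall>n\<ge>N. (\<lambda>x. \<bar>l1_fn (X n) x - G x\<bar>) summable_on UNIV \<and>
                        (\<Sum>\<^sub>\<infinity>x. \<bar>l1_fn (X n) x - G x\<bar>) \<le> e" if "e > 0" for e
  proof -
    obtain N where "\<forall>m\<ge>N. \<forall>n\<ge>N. norm (X m - X n) < e"
      using CauchyD[OF Cauchy \<open>e > 0\<close>] by blast
    then show ?thesis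
      using l1_limit_estimate[of N X _ e G, OF _ lim] by (meson less_imp_le)
  qed
  obtain N where "(\<lambda>x. \<bar>l1_fn (X N) x - G x\<bar>) summable_on UNIV"
    using tail[of 1] by auto
  from summable_on_diff[OF summable_on_l1_fn[of "X N"] summable_on_real_of_abs[OF this]]
  have "G summable_on UNIV"
    by simp
  then have dist_eq: "dist (X n) (Abs_l1 G) = (\<Sum>\<^sub>\<infinity>x. \<bar>l1_fn (X n) x - G x\<bar>)" for n
    by (simp add: dist_norm norm_l1.rep_eq l1_fn_diff l1_fn_Abs_l1)
  have "X \<longlonglongrightarrow> Abs_l1 G"
  proof (rule metric_LIMSEQ_I)
    fix e :: real
    assume "e > 0"
    then obtain M where M: "\<And>n. n \<ge> M \<Longrightarrow> (\<Sum>\<^sub>\<infinity>x. \<bar>l1_fn (X n) x - G x\<bar>) \<le> e / 2"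
      using tail[of "e / 2"] by auto
    have "dist (X n) (Abs_l1 G) < e" if "n \<ge> M" for n
      using M[OF that] \<open>e > 0\<close> by (simp add: dist_eq)
    then show "\<exists>M. \<forall>n\<ge>M. dist (X n) (Abs_l1 G) < e"
      by blast
  qed
  then show "convergent X"
    by (rule convergentI)
qed

instantiation l1 :: (ab_group_add) comm_ring_1
begin

lift_definition times_l1 :: "'a l1 \<Rightarrow> 'a l1 \<Rightarrow> 'a l1" is convolution
  by (rule summable_on_convolution)

lift_definition one_l1 :: "'a l1" is unit_impulse
  by (rule summable_on_unit_impulse)

instance
proof
  fix a b c :: "'a l1"
  show "a * b * c = a * (b * c)" by transfer (auto intro!: ext convolution_assoc)
  show "a * b = b * a" by transfer (rule convolution_commute)
  show "1 * a = a" by transfer (auto intro!: ext convolution_unit_impulse_left)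
  show "(a + b) * c = a * c + b * c" by transfer (auto intro!: ext convolution_add_left)
  show "(0::'a l1) \<noteq> 1" by transfer (auto simp: unit_impulse_def fun_eq_iff)
qed

end

instance l1 :: (ab_group_add) real_normed_algebra_1
proof
  fix x y :: "'a l1" and a :: real
  have scale_left: "a *\<^sub>R x * y = a *\<^sub>R (x * y)" for x y :: "'a l1"
    by transfer (auto intro!: ext convolution_scale_left)
  show "a *\<^sub>R x * y = a *\<^sub>R (x * y)" by (rule scale_left)
  show "x * a *\<^sub>R y = a *\<^sub>R (x * y)" by (metis mult.commute scale_left)
  show "norm (x * y) \<le> norm x * norm y" by transfer (rule infsum_abs_convolution_le)
  show "norm (1::'a l1) = 1" by transfer (rule infsum_abs_unit_impulse)
qed

lemma l1_fn_times: "l1_fn (g * h) x = (\<Sum>\<^sub>\<infinity>\<xi>. l1_fn g \<xi> * l1_fn h (x - \<xi>))"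
  by transfer (simp add: convolution_def)

lemma l1_fn_one: "l1_fn 1 = unit_impulse"
  by transfer simp

section \<open>Norm-continuous semigroups in a Banach algebra\<close>

lemma right_invertible_if_norm_one_minus_less_one:
  fixes y :: "'a::{real_normed_algebra_1, banach}"
  assumes "norm (1 - y) < 1"
  shows "\<exists>z. y * z = 1"
proof -
  define q where "q = 1 - y"
  have "summable (\<lambda>n. norm (q ^ n))"
    by (rule summable_comparison_test[OF _ summable_geometric[of "norm q"]])
      (use assms in \<open>auto simp: q_def norm_power_ineq\<close>)
  then have summable: "summable (\<lambda>n. q ^ n)"
    by (rule summable_norm_cancel)
  have partial_sums: "y * (\<Sum>k<n. q ^ k) = 1 - q ^ n" for n
    by (induction n) (simp_all add: q_def algebra_simps)
  have "(\<lambda>n. y * (\<Sum>k<n. q ^ k)) \<longlonglongrightarrow> y * (\<Sum>n. q ^ n)"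
    by (intro tendsto_mult tendsto_const summable_LIMSEQ summable)
  moreover have "(\<lambda>n. y * (\<Sum>k<n. q ^ k)) \<longlonglongrightarrow> 1"
    unfolding partial_sums
    using tendsto_diff[OF tendsto_const summable_LIMSEQ_zero[OF summable], of 1] by simp
  ultimately have "y * (\<Sum>n. q ^ n) = 1"
    by (rule LIMSEQ_unique)
  then show ?thesis ..
qed

locale norm_continuous_semigroup =
  fixes U :: "real \<Rightarrow> 'a::{real_normed_algebra_1, banach}"
  assumes add: "0 \<le> s \<Longrightarrow> 0 \<le> t \<Longrightarrow> U (s + t) = U s * U t"
    and zero: "U 0 = 1"
    and tendsto_at_right_0: "(U \<longlongrightarrow> 1) (at_right 0)"
begin

lemma near_one: "e > 0 \<Longrightarrow> \<exists>d>0. \<forall>r. 0 \<le> r \<longrightarrow> r \<le> d \<longrightarrow> norm (U r - 1) < e"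
proof -
  assume "e > 0"
  from tendstoD[OF tendsto_at_right_0 this] obtain b
    where "b > 0" and b: "\<And>r. 0 < r \<Longrightarrow> r < b \<Longrightarrow> norm (U r - 1) < e"
    by (auto simp: eventually_at_right_field dist_norm)
  have "norm (U r - 1) < e" if "0 \<le> r" "r \<le> b / 2" for r
    using that b[of r] zero \<open>e > 0\<close> \<open>b > 0\<close> by (cases "r = 0") auto
  with \<open>b > 0\<close> show ?thesis
    by (intro exI[of _ "b / 2"]) auto
qed

lemma norm_le_power_of_two:
  assumes "d > 0" and le_2: "\<And>r. 0 \<le> r \<Longrightarrow> r \<le> d \<Longrightarrow> norm (U r) \<le> 2"
  shows "0 \<le> r \<Longrightarrow> r \<le> real N * d \<Longrightarrow> norm (U r) \<le> 2 ^ N"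
proof (induction N arbitrary: r)
  case 0
  then show ?case using zero by simp
next
  case (Suc N)
  show ?case
  proof (cases "r \<le> d")
    case True
    have "(2::real) \<le> 2 ^ Suc N"
      using one_le_power[of "2::real" N] by simp
    then show ?thesis
      using le_2[OF Suc.prems(1) True] by linarith
  next
    case False
    then have "norm (U r) \<le> norm (U (r - d)) * norm (U d)"
      using add[of "r - d" d] \<open>d > 0\<close> by (simp add: norm_mult_ineq)
    also have "\<dots> \<le> 2 ^ N * 2"
      using Suc False le_2[of d] \<open>d > 0\<close> by (intro mult_mono) (auto simp: algebra_simps)
    finally show ?thesis by simp
  qed
qed

lemma bounded_on_interval: "\<exists>M>0. \<forall>r. 0 \<le> r \<longrightarrow> r \<le> S \<longrightarrow> norm (U r) \<le> M"
proof -
  obtain d where "d > 0" and d: "\<And>r. 0 \<le> r \<Longrightarrow> r \<le> d \<Longrightarrow> norm (U r - 1) < 1"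
    using near_one[of 1] by auto
  have le_2: "norm (U r) \<le> 2" if "0 \<le> r" "r \<le> d" for r
    using norm_triangle_ineq[of "U r - 1" 1] d[OF that] by simp
  obtain N :: nat where "S / d \<le> real N"
    using real_arch_simple by blast
  then have "S \<le> real N * d"
    using \<open>d > 0\<close> by (simp add: field_simps)
  then show ?thesis
    using norm_le_power_of_two[OF \<open>d > 0\<close> le_2, of _ N] by (intro exI[of _ "2 ^ N"]) auto
qed

lemma norm_diff_le:
  assumes "0 \<le> s" "s \<le> t"
  shows "norm (U t - U s) \<le> norm (U s) * norm (U (t - s) - 1)"
proof -
  have "U t - U s = U s * (U (t - s) - 1)"
    using add[of s "t - s"] assms by (simp add: algebra_simps)
  then show ?thesis
    by (simp add: norm_mult_ineq)
qed

lemma continuous_on_nonneg: "continuous_on {0..} U"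
  unfolding continuous_on_iff
proof (intro ballI allI impI)
  fix s e :: real
  assume "s \<in> {0..}" and "e > 0"
  obtain M where "M > 0" and M: "\<And>r. 0 \<le> r \<Longrightarrow> r \<le> s + 1 \<Longrightarrow> norm (U r) \<le> M"
    using bounded_on_interval[of "s + 1"] by auto
  obtain d where "d > 0" and d: "\<And>r. 0 \<le> r \<Longrightarrow> r \<le> d \<Longrightarrow> norm (U r - 1) < e / M"
    using near_one[of "e / M"] \<open>e > 0\<close> \<open>M > 0\<close> by auto
  have close: "norm (U v - U u) < e" if "0 \<le> u" "u \<le> v" "v - u < min d 1" "u \<le> s + 1" for u v
  proof -
    have "norm (U v - U u) \<le> norm (U u) * norm (U (v - u) - 1)"
      using norm_diff_le that by simp
    also have "\<dots> \<le> M * norm (U (v - u) - 1)"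
      by (rule mult_right_mono) (use M that in auto)
    also have "\<dots> < M * (e / M)"
      by (rule mult_strict_left_mono[OF d \<open>M > 0\<close>]) (use that in auto)
    finally show ?thesis
      using \<open>M > 0\<close> by simp
  qed
  show "\<exists>d>0. \<forall>t\<in>{0..}. dist t s < d \<longrightarrow> dist (U t) (U s) < e"
  proof (intro exI[of _ "min d 1"] conjI ballI impI)
    fix t :: real
    assume t: "t \<in> {0..}" "dist t s < min d 1"
    show "dist (U t) (U s) < e"
    proof (cases "s \<le> t")
      case True
      then show ?thesis
        using close[of s t] t \<open>s \<in> {0..}\<close> by (simp add: dist_norm dist_real_def)
    next
      case False
      then show ?thesis
        using close[of t s] t by (simp add: dist_norm dist_real_def norm_minus_commute)
    qed
  qed (use \<open>d > 0\<close> in auto)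
qed

lemma integrable_on_interval: "0 \<le> a \<Longrightarrow> U integrable_on {a..b}"
  by (rule integrable_continuous_interval) (auto intro: continuous_on_subset[OF continuous_on_nonneg])

lemma has_vector_derivative_integral:
  "0 \<le> u \<Longrightarrow> ((\<lambda>v. integral {0..v} U) has_vector_derivative U u) (at u within {0..})"
proof -
  assume "0 \<le> u"
  have "((\<lambda>v. integral {0..v} U) has_vector_derivative U u) (at u within {0..u + 1})"
    by (rule integral_has_vector_derivative)
      (use \<open>0 \<le> u\<close> in \<open>auto intro: continuous_on_subset[OF continuous_on_nonneg]\<close>)
  moreover have "at u within {0..u + 1} = at u within {0..}"
    by (rule at_within_nhd[of _ "{..<u + 1}"]) auto
  ultimately show ?thesis by simp
qed

lemma has_vector_derivative_integral_shifted:
  assumes "0 \<le> s" "0 \<le> d"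
  shows "((\<lambda>t. integral {0..t + d} U) has_vector_derivative U (s + d)) (at s within {0..})"
proof -
  have "((\<lambda>t. t + d) has_vector_derivative 1) (at s within {0..})"
    by (auto intro!: derivative_eq_intros)
  moreover have "((\<lambda>v. integral {0..v} U) has_vector_derivative U (s + d))
      (at (s + d) within (\<lambda>t. t + d) ` {0..})"
    by (rule has_vector_derivative_within_subset[OF has_vector_derivative_integral])
      (use assms in auto)
  ultimately have "(((\<lambda>v. integral {0..v} U) \<circ> (\<lambda>t. t + d)) has_vector_derivative 1 *\<^sub>R U (s + d))
      (at s within {0..})"
    by (rule vector_diff_chain_within)
  then show ?thesis
    by (simp add: o_def)
qed

lemma mult_integral:
  assumes "0 \<le> s" "0 \<le> d"
  shows "U s * integral {0..d} U = integral {0..s + d} U - integral {0..s} U"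
proof -
  have "U s * integral {0..d} U = integral {0..d} (\<lambda>r. U s * U r)"
    by (rule integral_unique[symmetric], rule has_integral_mult_right)
      (use integrable_on_interval in auto)
  also have "\<dots> = integral {0..d} (\<lambda>r. U (r + s))"
    using add[of s] \<open>0 \<le> s\<close> by (intro integral_cong) (simp add: add.commute)
  also have "\<dots> = integral {s..s + d} U"
    using integral_shift_real_ivl[where a = s and b = "s + d" and c = s and f = U]
    by (simp add: add.commute)
  also have "\<dots> = integral {0..s + d} U - integral {0..s} U"
    using Henstock_Kurzweil_Integration.integral_combine[where a = 0 and c = s and b = "s + d" and f = U] assms integrable_on_interval[of 0 "s + d"]
    by (simp add: algebra_simps)
  finally show ?thesis .
qed

lemma average_near_one: "\<exists>d>0. norm (1 - (1 / d) *\<^sub>R integral {0..d} U) < 1"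
proof -
  obtain d where "d > 0" and d: "\<And>r. 0 \<le> r \<Longrightarrow> r \<le> d \<Longrightarrow> norm (U r - 1) < 1 / 2"
    using near_one[of "1 / 2"] by auto
  have "norm (integral {0..d} U - d *\<^sub>R 1) = norm (integral {0..d} (\<lambda>r. U r - 1))"
    using \<open>d > 0\<close> by (subst integral_diff) (auto intro: integrable_on_interval)
  also have "\<dots> \<le> (1 / 2) * (d - 0)"
  proof (rule integral_bound)
    show "continuous_on {0..d} (\<lambda>r. U r - 1)"
      by (intro continuous_intros continuous_on_subset[OF continuous_on_nonneg]) auto
    show "norm (U r - 1) \<le> 1 / 2" if "r \<in> {0..d}" for r
      using d[of r] that by simp
  qed (use \<open>d > 0\<close> in simp)
  finally have "norm (integral {0..d} U - d *\<^sub>R 1) \<le> d / 2"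
    by simp
  moreover have "1 - (1 / d) *\<^sub>R integral {0..d} U = (1 / d) *\<^sub>R (d *\<^sub>R 1 - integral {0..d} U)"
    using \<open>d > 0\<close> by (simp add: scaleR_right_diff_distrib)
  ultimately have "norm (1 - (1 / d) *\<^sub>R integral {0..d} U) \<le> (1 / d) * (d / 2)"
    using \<open>d > 0\<close> by (simp add: norm_minus_commute divide_right_mono)
  with \<open>d > 0\<close> show ?thesis
    by (intro exI[of _ d]) auto
qed

text \<open>Following the classical argument for uniformly continuous semigroups: the average
  \<open>(1/d) \<integral>\<^sub>0\<^sup>d U\<close> is invertible for small \<open>d\<close>, and \<open>U s\<close> times it is the difference quotient
  of the primitive of \<open>U\<close>, which is differentiable.\<close>
theorem has_vector_derivative_generator:
  "\<exists>A. \<forall>s\<ge>0. (U has_vector_derivative U s * A) (at s within {0..})"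
proof -
  obtain d where "d > 0" and "norm (1 - (1 / d) *\<^sub>R integral {0..d} U) < 1"
    using average_near_one by blast
  then obtain Z where Z: "(1 / d) *\<^sub>R integral {0..d} U * Z = 1"
    using right_invertible_if_norm_one_minus_less_one by blast
  define G where "G v = integral {0..v} U" for v
  define A where "A = (1 / d) *\<^sub>R ((U d - 1) * Z)"
  have "(U has_vector_derivative U s * A) (at s within {0..})" if "0 \<le> s" for s
  proof -
    have U_eq: "U t = (1 / d) *\<^sub>R ((G (t + d) - G t) * Z)" if "t \<in> {0..}" for t
    proof -
      have "U t = U t * ((1 / d) *\<^sub>R integral {0..d} U * Z)"
        by (simp only: Z mult_1_right)
      also have "\<dots> = (1 / d) *\<^sub>R ((G (t + d) - G t) * Z)"
        using mult_integral[of t d] that \<open>d > 0\<close>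
        by (simp only: G_def mult_scaleR_left mult_scaleR_right mult.assoc[symmetric])
          simp
      finally show ?thesis .
    qed
    have "((\<lambda>t. G (t + d)) has_vector_derivative U (s + d)) (at s within {0..})"
      unfolding G_def using \<open>0 \<le> s\<close> \<open>d > 0\<close> by (simp add: has_vector_derivative_integral_shifted)
    then have "((\<lambda>t. (1 / d) *\<^sub>R ((G (t + d) - G t) * Z)) has_vector_derivative
        (1 / d) *\<^sub>R ((U (s + d) - U s) * Z)) (at s within {0..})"
      by (intro bounded_linear.has_vector_derivative[OF bounded_linear_scaleR_right]
          has_vector_derivative_mult_left has_vector_derivative_diff)
        (use has_vector_derivative_integral[OF \<open>0 \<le> s\<close>] in \<open>simp_all add: G_def\<close>)
    moreover have "(1 / d) *\<^sub>R ((U (s + d) - U s) * Z) = U s * A"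
      using add[of s d] \<open>0 \<le> s\<close> \<open>d > 0\<close> by (simp add: A_def algebra_simps)
    ultimately show ?thesis
      by (intro has_vector_derivative_transform[OF _ U_eq]) (use \<open>0 \<le> s\<close> in auto)
  qed
  then show ?thesis by blast
qed

end

section \<open>Scale-space kernels on \<open>\<int>\<^sup>D\<close>\<close>

lemma linf_0: "linf (0 :: int ^ 'n::finite) = 0"
  by (simp add: linf_def)

lemma linf_le_1_iff: "linf (x :: int ^ 'n::finite) \<le> 1 \<longleftrightarrow> (\<forall>i. \<bar>x $ i\<bar> \<le> 1)"
  unfolding linf_def by (subst Max_le_iff) auto

lemma finite_linf_le_1: "finite {x :: int ^ 'n::finite. linf x \<le> 1}"
proof -
  have "finite (vec_nth -` PiE (UNIV :: 'n set) (\<lambda>_. {-1..1::int}))"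
    by (rule finite_vimageI) (auto simp: inj_def vec_eq_iff intro: finite_PiE)
  moreover have "{x :: int ^ 'n. linf x \<le> 1} \<subseteq> vec_nth -` PiE (UNIV :: 'n set) (\<lambda>_. {-1..1::int})"
    by (auto simp: linf_le_1_iff PiE_UNIV_domain abs_le_iff)
  ultimately show ?thesis
    by (rule finite_subset[rotated])
qed

lemma has_pre_scale_space_props_max:
  assumes "has_pre_scale_space_props L" "0 \<le> s0"
    and "((\<lambda>s. L x0 s) has_real_derivative d) (at s0 within {0..})"
    and "\<And>x. linf (x - x0) = 1 \<Longrightarrow> L x s0 \<le> L x0 s0"
  shows "d \<le> 0"
  using assms unfolding has_pre_scale_space_props_def by blast

lemma has_pre_scale_space_props_min:
  assumes "has_pre_scale_space_props L" "0 \<le> s0"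
    and "((\<lambda>s. L x0 s) has_real_derivative d) (at s0 within {0..})"
    and "\<And>x. linf (x - x0) = 1 \<Longrightarrow> L x0 s0 \<le> L x s0"
  shows "d \<ge> 0"
  using assms unfolding has_pre_scale_space_props_def by blast

lemma has_pre_scale_space_props_flat:
  assumes "has_pre_scale_space_props L" "0 \<le> s0"
    and "((\<lambda>s. L x0 s) has_real_derivative d) (at s0 within {0..})"
    and "\<And>x. linf (x - x0) = 1 \<Longrightarrow> L x s0 = L x0 s0"
  shows "d = 0"
  using has_pre_scale_space_props_max[OF assms(1-3)] has_pre_scale_space_props_min[OF assms(1-3)]
    assms(4) by fastforce

lemma ddelta_eq_unit_impulse: "ddelta = unit_impulse"
  by (simp add: ddelta_def unit_impulse_def fun_eq_iff)

lemma scale_space_kernels_pre: "scale_space_kernels T \<Longrightarrow> pre_scale_space_kernels T"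
  by (simp add: scale_space_kernels_def)

lemma pre_scale_space_kernels_at_0: "pre_scale_space_kernels T \<Longrightarrow> T x 0 = ddelta x"
  by (simp add: pre_scale_space_kernels_def)

lemma pre_scale_space_kernels_summable:
  "pre_scale_space_kernels T \<Longrightarrow> 0 \<le> s \<Longrightarrow> (\<lambda>x. T x s) summable_on UNIV"
  unfolding pre_scale_space_kernels_def by (blast intro: summable_on_real_of_abs)

lemma pre_scale_space_rep_0:
  assumes "pre_scale_space_kernels T"
  shows "pre_scale_space_rep T f x 0 = f x"
  using convolution_unit_impulse_left[of f x]
  by (simp add: pre_scale_space_rep_def convolution_def pre_scale_space_kernels_at_0[OF assms]
      ddelta_eq_unit_impulse)

lemma pre_scale_space_rep_ddelta: "pre_scale_space_rep T ddelta = T"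
proof (intro ext)
  show "pre_scale_space_rep T ddelta x s = T x s" for x s
    unfolding pre_scale_space_rep_def
    by (subst infsum_single_point[where a = x]) (auto simp: ddelta_def)
qed

lemma has_pre_scale_space_props_kernel:
  assumes "scale_space_kernels T"
  shows "has_pre_scale_space_props T"
proof -
  have "(\<lambda>x. \<bar>ddelta x :: real\<bar>) summable_on UNIV"
    by (rule summable_on_single_point[where a = 0]) (simp add: ddelta_def)
  with assms have "has_pre_scale_space_props (pre_scale_space_rep T ddelta)"
    unfolding scale_space_kernels_def by blast
  then show ?thesis
    by (simp add: pre_scale_space_rep_ddelta)
qed

definition kernel_l1 :: "(int ^ 'n::finite \<Rightarrow> real \<Rightarrow> real) \<Rightarrow> real \<Rightarrow> (int ^ 'n) l1" where
  "kernel_l1 T s = Abs_l1 (\<lambda>x. T x s)"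

lemma l1_fn_kernel_l1:
  assumes "pre_scale_space_kernels T" "0 \<le> s"
  shows "l1_fn (kernel_l1 T s) = (\<lambda>x. T x s)"
  unfolding kernel_l1_def by (rule l1_fn_Abs_l1[OF pre_scale_space_kernels_summable[OF assms]])

lemma norm_continuous_semigroup_kernel_l1:
  assumes K: "pre_scale_space_kernels T"
  shows "norm_continuous_semigroup (kernel_l1 T)"
proof
  show "kernel_l1 T (s + t) = kernel_l1 T s * kernel_l1 T t" if "0 \<le> s" "0 \<le> t" for s t
  proof (rule l1_fn_inject[THEN iffD1], rule ext)
    fix x
    have "dconv (\<lambda>\<xi>. T \<xi> s) (\<lambda>\<xi>. T \<xi> t) x = T x (s + t)"
      using K that unfolding pre_scale_space_kernels_def by blast
    then show "l1_fn (kernel_l1 T (s + t)) x = l1_fn (kernel_l1 T s * kernel_l1 T t) x"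
      using that by (simp add: l1_fn_kernel_l1[OF K] l1_fn_times dconv_def del: l1_fn_inject)
  qed
  show "kernel_l1 T 0 = 1"
    by (rule l1_fn_inject[THEN iffD1])
      (simp add: l1_fn_kernel_l1[OF K] l1_fn_one pre_scale_space_kernels_at_0[OF K]
        ddelta_eq_unit_impulse)
  have "\<forall>\<^sub>F s in at_right 0. l1norm (\<lambda>x. T x s - ddelta x) = norm (kernel_l1 T s - 1)"
    unfolding eventually_at_right_field
    by (intro exI[of _ 1])
      (simp add: norm_l1.rep_eq l1_fn_diff l1_fn_kernel_l1[OF K] l1_fn_one l1norm_def
        ddelta_eq_unit_impulse)
  moreover have "((\<lambda>s. l1norm (\<lambda>x. T x s - ddelta x)) \<longlongrightarrow> 0) (at_right 0)"
    using K unfolding pre_scale_space_kernels_def by blast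
  ultimately have "((\<lambda>s. norm (kernel_l1 T s - 1)) \<longlongrightarrow> 0) (at_right 0)"
    by (rule Lim_transform_eventually[rotated])
  then show "(kernel_l1 T \<longlongrightarrow> 1) (at_right 0)"
    by (simp add: Lim_null[of _ 1] tendsto_norm_zero_iff)
qed

lemma pre_scale_space_rep_eq_l1:
  assumes "pre_scale_space_kernels T" "f summable_on UNIV" "0 \<le> t"
  shows "pre_scale_space_rep T f x t = l1_fn (kernel_l1 T t * Abs_l1 f) x"
  using assms by (simp add: pre_scale_space_rep_def l1_fn_times l1_fn_kernel_l1 l1_fn_Abs_l1)

definition infinitesimal_generator :: "(int ^ 'n::finite \<Rightarrow> real \<Rightarrow> real) \<Rightarrow> (int ^ 'n \<Rightarrow> real) \<Rightarrow> bool"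
  where "infinitesimal_generator T a \<longleftrightarrow>
    (\<forall>f. f summable_on UNIV \<longrightarrow> (\<forall>x. \<forall>s\<ge>0.
      ((\<lambda>t. pre_scale_space_rep T f x t) has_real_derivative
        (\<Sum>\<^sub>\<infinity>\<xi>. a \<xi> * pre_scale_space_rep T f (x + \<xi>) s)) (at s within {0..})))"

lemma infinitesimal_generatorD:
  assumes "infinitesimal_generator T a" "f summable_on UNIV" "0 \<le> s"
  shows "((\<lambda>t. pre_scale_space_rep T f x t) has_real_derivative
    (\<Sum>\<^sub>\<infinity>\<xi>. a \<xi> * pre_scale_space_rep T f (x + \<xi>) s)) (at s within {0..})"
  using assms unfolding infinitesimal_generator_def by blast

lemma infinitesimal_generator_kernel_derivative:
  assumes K: "pre_scale_space_kernels T" and a: "infinitesimal_generator T a"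
  shows "((\<lambda>t. T y t) has_real_derivative a (- y)) (at 0 within {0..})"
proof -
  have "ddelta summable_on UNIV"
    by (simp add: ddelta_eq_unit_impulse summable_on_unit_impulse)
  from infinitesimal_generatorD[OF a this order_refl]
  have "((\<lambda>t. pre_scale_space_rep T ddelta y t) has_real_derivative
      (\<Sum>\<^sub>\<infinity>\<xi>. a \<xi> * pre_scale_space_rep T ddelta (y + \<xi>) 0)) (at 0 within {0..})" .
  moreover have "(\<Sum>\<^sub>\<infinity>\<xi>. a \<xi> * T (y + \<xi>) 0) = a (- y) * T (y + - y) 0"
    by (rule infsum_single_point)
      (simp add: pre_scale_space_kernels_at_0[OF K] ddelta_def add_eq_0_iff)
  moreover have "T (y + - y) 0 = 1"
    by (simp add: pre_scale_space_kernels_at_0[OF K] ddelta_def)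
  ultimately show ?thesis
    by (simp add: pre_scale_space_rep_ddelta)
qed

lemma pre_scale_space_rep_has_derivative:
  fixes T :: "int ^ 'n::finite \<Rightarrow> real \<Rightarrow> real"
  assumes K: "pre_scale_space_kernels T" and f: "f summable_on UNIV" and "0 \<le> s"
    and A: "(kernel_l1 T has_vector_derivative kernel_l1 T s * A) (at s within {0..})"
  shows "((\<lambda>t. pre_scale_space_rep T f x t) has_real_derivative
      (\<Sum>\<^sub>\<infinity>\<xi>. l1_fn A (- \<xi>) * pre_scale_space_rep T f (x + \<xi>) s)) (at s within {0..})"
proof -
  define F where "F = Abs_l1 f"
  have rep: "pre_scale_space_rep T f y t = l1_fn (kernel_l1 T t * F) y" if "t \<in> {0..}" for y t
    using that pre_scale_space_rep_eq_l1[OF K f] by (simp add: F_def)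
  have "((\<lambda>t. l1_fn (kernel_l1 T t * F) x) has_vector_derivative
      l1_fn (kernel_l1 T s * A * F) x) (at s within {0..})"
    using bounded_linear_compose[OF bounded_linear_l1_fn bounded_linear_mult_left]
    by (rule bounded_linear.has_vector_derivative[OF _ A])
  from has_vector_derivative_transform[OF _ rep this] \<open>0 \<le> s\<close>
  have D: "((\<lambda>t. pre_scale_space_rep T f x t) has_vector_derivative
      l1_fn (kernel_l1 T s * A * F) x) (at s within {0..})"
    by simp
  have "bij_betw uminus UNIV (UNIV :: (int ^ 'n) set)"
    by (rule bij_betwI[of _ _ _ uminus]) auto
  note reflect = infsum_reindex_bij_betw[OF this,
      of "\<lambda>\<xi>. l1_fn A \<xi> * pre_scale_space_rep T f (x - \<xi>) s", symmetric]
  have "l1_fn (kernel_l1 T s * A * F) x = l1_fn (A * (kernel_l1 T s * F)) x"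
    by (simp only: ac_simps)
  also have "\<dots> = (\<Sum>\<^sub>\<infinity>\<xi>. l1_fn A \<xi> * pre_scale_space_rep T f (x - \<xi>) s)"
    using \<open>0 \<le> s\<close> by (simp add: l1_fn_times rep)
  also have "\<dots> = (\<Sum>\<^sub>\<infinity>\<xi>. l1_fn A (- \<xi>) * pre_scale_space_rep T f (x + \<xi>) s)"
    using reflect by simp
  finally show ?thesis
    using D by (simp only: has_real_derivative_iff_has_vector_derivative)
qed

lemma pre_scale_space_kernels_has_generator:
  fixes T :: "int ^ 'n::finite \<Rightarrow> real \<Rightarrow> real"
  assumes K: "pre_scale_space_kernels T"
  shows "\<exists>a. infinitesimal_generator T a"
proof -
  interpret norm_continuous_semigroup "kernel_l1 T"
    using norm_continuous_semigroup_kernel_l1[OF K] .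
  obtain A where A: "\<And>s. 0 \<le> s \<Longrightarrow>
      (kernel_l1 T has_vector_derivative kernel_l1 T s * A) (at s within {0..})"
    using has_vector_derivative_generator by blast
  have "infinitesimal_generator T (\<lambda>\<xi>. l1_fn A (- \<xi>))"
    unfolding infinitesimal_generator_def
    by (intro allI impI pre_scale_space_rep_has_derivative[OF K _ _ A])
  then show ?thesis
    by blast
qed

lemma scale_space_generator_nonneg:
  assumes K: "scale_space_kernels T" and a: "infinitesimal_generator T a" and "\<xi> \<noteq> 0"
  shows "0 \<le> a \<xi>"
proof -
  note pre = scale_space_kernels_pre[OF K]
  have "T (- \<xi>) 0 \<le> T x 0" for x
    using \<open>\<xi> \<noteq> 0\<close> by (simp add: pre_scale_space_kernels_at_0[OF pre] ddelta_def)
  then show ?thesis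
    using has_pre_scale_space_props_min[OF has_pre_scale_space_props_kernel[OF K] order_refl
        infinitesimal_generator_kernel_derivative[OF pre a, of "- \<xi>"]]
    by simp
qed

lemma scale_space_generator_local:
  assumes K: "scale_space_kernels T" and a: "infinitesimal_generator T a" and "1 < linf \<xi>"
  shows "a \<xi> = 0"
proof -
  note pre = scale_space_kernels_pre[OF K]
  have "\<xi> \<noteq> 0"
    using \<open>1 < linf \<xi>\<close> by (auto simp: linf_0)
  moreover have "x \<noteq> 0" if "linf (x - (- \<xi>)) = 1" for x
    using that \<open>1 < linf \<xi>\<close> by auto
  ultimately have "T x 0 = T (- \<xi>) 0" if "linf (x - (- \<xi>)) = 1" for x
    using that by (auto simp: pre_scale_space_kernels_at_0[OF pre] ddelta_def)
  then show ?thesis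
    using has_pre_scale_space_props_flat[OF has_pre_scale_space_props_kernel[OF K] order_refl
        infinitesimal_generator_kernel_derivative[OF pre a, of "- \<xi>"]]
    by simp
qed

lemma scale_space_generator_sum_zero:
  fixes T :: "int ^ 'n::finite \<Rightarrow> real \<Rightarrow> real"
  assumes K: "scale_space_kernels T" and a: "infinitesimal_generator T a"
  shows "(\<Sum>\<^sub>\<infinity>\<xi>. a \<xi>) = 0"
proof -
  note pre = scale_space_kernels_pre[OF K]
  define g :: "int ^ 'n \<Rightarrow> real" where "g x = (if linf x \<le> 1 then 1 else 0)" for x
  have "g summable_on UNIV \<longleftrightarrow> g summable_on {x. linf x \<le> 1}"
    by (rule summable_on_cong_neutral) (auto simp: g_def)
  then have g: "g summable_on UNIV"
    using summable_on_finite[OF finite_linf_le_1] by blast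
  then have "(\<lambda>x. \<bar>g x\<bar>) summable_on UNIV"
    by (rule summable_on_abs_real)
  then have props: "has_pre_scale_space_props (pre_scale_space_rep T g)"
    using K by (simp add: scale_space_kernels_def)
  from infinitesimal_generatorD[OF a g order_refl, of 0]
  have deriv: "((\<lambda>t. pre_scale_space_rep T g 0 t) has_real_derivative (\<Sum>\<^sub>\<infinity>\<xi>. a \<xi> * g \<xi>))
      (at 0 within {0..})"
    by (simp add: pre_scale_space_rep_0[OF pre])
  have "(\<Sum>\<^sub>\<infinity>\<xi>. a \<xi> * g \<xi>) = 0"
    by (rule has_pre_scale_space_props_flat[OF props order_refl deriv])
      (simp add: pre_scale_space_rep_0[OF pre] g_def linf_0)
  moreover have "(\<Sum>\<^sub>\<infinity>\<xi>. a \<xi> * g \<xi>) = (\<Sum>\<^sub>\<infinity>\<xi>. a \<xi>)"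
    by (rule infsum_cong) (auto simp: g_def scale_space_generator_local[OF K a])
  ultimately show ?thesis
    by simp
qed

theorem theoremA7:
  fixes T :: "int ^ 'n::finite \<Rightarrow> real \<Rightarrow> real" and f :: "int ^ 'n \<Rightarrow> real"
  assumes "scale_space_kernels T"
    and "(\<lambda>x. \<bar>f x\<bar>) summable_on UNIV"
  shows "\<exists>a :: int ^ 'n \<Rightarrow> real.
           (\<forall>\<xi>. linf \<xi> > 1 \<longrightarrow> a \<xi> = 0) \<and>
           (\<forall>\<xi>. \<xi> \<noteq> 0 \<longrightarrow> a \<xi> \<ge> 0) \<and>
           (\<Sum>\<^sub>\<infinity>\<xi>. a \<xi>) = 0 \<and>
           (\<forall>x. \<forall>s\<ge>0. ((\<lambda>t. pre_scale_space_rep T f x t) has_real_derivative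
                 (\<Sum>\<^sub>\<infinity>\<xi>. a \<xi> * pre_scale_space_rep T f (x + \<xi>) s)) (at s within {0..})) \<and>
           (\<forall>x. pre_scale_space_rep T f x 0 = f x)"
proof -
  note pre = scale_space_kernels_pre[OF assms(1)]
  obtain a where a: "infinitesimal_generator T a"
    using pre_scale_space_kernels_has_generator[OF pre] by blast
  have "f summable_on UNIV"
    using assms(2) by (rule summable_on_real_of_abs)
  show ?thesis
  proof (intro exI[of _ a] conjI allI impI)
    show "a \<xi> = 0" if "1 < linf \<xi>" for \<xi>
      using scale_space_generator_local[OF assms(1) a that] .
    show "0 \<le> a \<xi>" if "\<xi> \<noteq> 0" for \<xi>
      using scale_space_generator_nonneg[OF assms(1) a that] .
    show "(\<Sum>\<^sub>\<infinity>\<xi>. a \<xi>) = 0"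
      using scale_space_generator_sum_zero[OF assms(1) a] .
    show "((\<lambda>t. pre_scale_space_rep T f x t) has_real_derivative
        (\<Sum>\<^sub>\<infinity>\<xi>. a \<xi> * pre_scale_space_rep T f (x + \<xi>) s)) (at s within {0..})" if "0 \<le> s" for x s
      using infinitesimal_generatorD[OF a \<open>f summable_on UNIV\<close> that] .
    show "pre_scale_space_rep T f x 0 = f x" for x
      using pre_scale_space_rep_0[OF pre] .
  qed
qed

end
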